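(* Let $k\in\{1,2\}$, $\xi\in\mathbb{C}$, $f:\mathbb{N}\to[0,\infty)$, and $A=\xi(a^\dagger)^k+\xi^*a^k+f(a^\dagger a)$ with domain $\mathcal{D}_0$. Suppose there exist $C>0$ and $N\in\mathbb{N}$ such that $f(n)\le Cn^{k/2}$ for all $n\ge N$. Then $A$ is essentially self-adjoint.
   Context: $\mathbb{N}=\{0,1,2,\dots\}$. $\mathcal{H}$ is a separable complex Hilbert space with orthonormal basis $(\phi_n)_{n\in\mathbb{N}}$; $\mathcal{D}_0$ is the set of finite linear combinations of the $\phi_n$. The operators $a,a^\dagger$ have domain $\mathcal{D}_0$ and act by $a\phi_n=\sqrt{n}\,\phi_{n-1}$ ($a\phi_0=0$), $a^\dagger\phi_n=\sqrt{n+1}\,\phi_{n+1}$, extended linearly. $f(a^\dagger a)$ has domain $\mathcal{D}_0$ and $f(a^\dagger a)\phi_n=f(n)\phi_n$. *)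

theory Defs
  imports "HOL-Analysis.Analysis"
begin

text \<open>Concrete model of the separable Hilbert space: H = l2(N) of complex sequences,
  with phi_n the n-th standard unit vector. Unbounded operators are represented by graphs.\<close>

type_synonym vec = "nat \<Rightarrow> complex"

definition ell2 :: "vec set" where
  "ell2 = {x. summable (\<lambda>n. (cmod (x n))\<^sup>2)}"

definition ell2_inner :: "vec \<Rightarrow> vec \<Rightarrow> complex" where
  "ell2_inner x y = (\<Sum>n. cnj (x n) * y n)"

definition ell2_norm :: "vec \<Rightarrow> real" where
  "ell2_norm x = sqrt (\<Sum>n. (cmod (x n))\<^sup>2)"

text \<open>D_0: finite linear combinations of the basis vectors = finitely supported sequences.\<close>
definition D0 :: "vec set" where
  "D0 = {x. finite {n. x n \<noteq> 0}}"

text \<open>Annihilation: a phi_n = sqrt n phi_(n-1); on coefficients (a x)_m = sqrt(m+1) x_(m+1).\<close>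
definition ann :: "vec \<Rightarrow> vec" where
  "ann x = (\<lambda>m. complex_of_real (sqrt (real (Suc m))) * x (Suc m))"

text \<open>Creation: a^dagger phi_n = sqrt(n+1) phi_(n+1); on coefficients (a^dagger x)_m = sqrt m x_(m-1), (a^dagger x)_0 = 0.\<close>
definition cre :: "vec \<Rightarrow> vec" where
  "cre x = (\<lambda>m. if m = 0 then 0 else complex_of_real (sqrt (real m)) * x (m - 1))"

text \<open>f(a^dagger a) phi_n = f n phi_n.\<close>
definition numfun :: "(nat \<Rightarrow> real) \<Rightarrow> vec \<Rightarrow> vec" where
  "numfun f x = (\<lambda>m. complex_of_real (f m) * x m)"

definition opA :: "nat \<Rightarrow> complex \<Rightarrow> (nat \<Rightarrow> real) \<Rightarrow> vec \<Rightarrow> vec" where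
  "opA k \<xi> f x = (\<lambda>m. \<xi> * (cre ^^ k) x m + cnj \<xi> * (ann ^^ k) x m + numfun f x m)"

definition graph_of :: "vec set \<Rightarrow> (vec \<Rightarrow> vec) \<Rightarrow> (vec \<times> vec) set" where
  "graph_of D T = {(x, T x) | x. x \<in> D}"

definition graph_closure :: "(vec \<times> vec) set \<Rightarrow> (vec \<times> vec) set" where
  "graph_closure G = {(x, y). x \<in> ell2 \<and> y \<in> ell2 \<and>
     (\<exists>X Y. (\<forall>m. (X m, Y m) \<in> G) \<and>
        (\<lambda>m. ell2_norm (X m - x)) \<longlonglongrightarrow> 0 \<and>
        (\<lambda>m. ell2_norm (Y m - y)) \<longlonglongrightarrow> 0)}"

definition graph_adjoint :: "(vec \<times> vec) set \<Rightarrow> (vec \<times> vec) set" where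
  "graph_adjoint G = {(y, z). y \<in> ell2 \<and> z \<in> ell2 \<and>
     (\<forall>(x, w) \<in> G. ell2_inner w y = ell2_inner x z)}"

definition self_adjoint_graph :: "(vec \<times> vec) set \<Rightarrow> bool" where
  "self_adjoint_graph G \<longleftrightarrow> graph_adjoint G = G"

definition essentially_self_adjoint :: "vec set \<Rightarrow> (vec \<Rightarrow> vec) \<Rightarrow> bool" where
  "essentially_self_adjoint D T \<longleftrightarrow> self_adjoint_graph (graph_closure (graph_of D T))"

end

theory Submission
  imports Defs
begin

(* Since A is symmetric against arbitrary sequences, its adjoint acts by the formal expression
   of A, and it suffices to approximate every y in ell2 with A y in ell2 by finitely supported
   vectors in the graph norm of A.  The truncations chi_R y with chi_R(n) = clamp(2 - n/R) do this:
   chi_R commutes with f(a^dagger a), and the coefficients of (a^dagger)^k and a^k are at most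
   (n + k)^(k/2) while chi_R(n) - chi_R(n + k) is at most k/R and vanishes for n >= 2R, so for
   k <= 2 the commutator of A with chi_R is bounded uniformly in R.  Dominated convergence for
   series then gives A (chi_R y) -> A y. *)

section \<open>Finitely supported and square-summable sequences\<close>

lemma sums_shift_right:
  fixes g :: "nat \<Rightarrow> 'a::real_normed_vector"
  shows "g sums s \<Longrightarrow> (\<lambda>n. if j \<le> n then g (n - j) else 0) sums s"
  using sums_iff_shift[of "\<lambda>n. if j \<le> n then g (n - j) else 0" j s] by simp

lemma D0_iff_eventually_zero: "u \<in> D0 \<longleftrightarrow> (\<forall>\<^sub>F n in sequentially. u n = 0)"
  unfolding D0_def cofinite_eq_sequentially[symmetric] eventually_cofinite by simp

lemma D0_inner_summable: "u \<in> D0 \<Longrightarrow> summable (\<lambda>n. cnj (u n) * v n)"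
  unfolding D0_def by (rule summable_finite[of "{n. u n \<noteq> 0}"]) auto

lemma D0_subset_ell2: "D0 \<subseteq> ell2"
proof
  fix u assume "u \<in> D0"
  then show "u \<in> ell2"
    unfolding D0_def ell2_def by (auto intro: summable_finite[of "{n. u n \<noteq> 0}"])
qed

lemma ell2_inner_basis_left: "ell2_inner (\<lambda>n. if n = j then 1 else 0) v = v j"
  unfolding ell2_inner_def by (subst suminf_finite[of "{j}"]) auto

lemma cmod_add_sq_le: "(cmod (a + b))\<^sup>2 \<le> 2 * ((cmod a)\<^sup>2 + (cmod b)\<^sup>2)"
proof -
  have "(cmod (a + b))\<^sup>2 \<le> (cmod a + cmod b)\<^sup>2"
    by (intro power_mono norm_triangle_ineq) simp
  also have "\<dots> \<le> 2 * ((cmod a)\<^sup>2 + (cmod b)\<^sup>2)"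
    using sum_squares_bound[of "cmod a" "cmod b"] by (simp add: power2_sum)
  finally show ?thesis .
qed

lemma ell2_diff:
  assumes "a \<in> ell2" "b \<in> ell2" shows "a - b \<in> ell2"
proof -
  have "(cmod (a n - b n))\<^sup>2 \<le> 2 * ((cmod (a n))\<^sup>2 + (cmod (b n))\<^sup>2)" for n
    using cmod_add_sq_le[of "a n" "- b n"] by simp
  moreover have "summable (\<lambda>n. 2 * ((cmod (a n))\<^sup>2 + (cmod (b n))\<^sup>2))"
    using assms unfolding ell2_def by (intro summable_add summable_mult) auto
  ultimately show ?thesis
    unfolding ell2_def by (auto intro: summable_comparison_test'[where N = 0])
qed

lemma ell2_summable_norm_mult:
  assumes "a \<in> ell2" "b \<in> ell2"
  shows "summable (\<lambda>n. cmod (a n) * cmod (b n))"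
proof (rule summable_comparison_test'[where N = 0])
  show "summable (\<lambda>n. ((cmod (a n))\<^sup>2 + (cmod (b n))\<^sup>2) / 2)"
    using assms unfolding ell2_def by (auto intro: summable_divide summable_add)
  show "norm (cmod (a n) * cmod (b n)) \<le> ((cmod (a n))\<^sup>2 + (cmod (b n))\<^sup>2) / 2" for n
    using sum_squares_bound[of "cmod (a n)" "cmod (b n)"] by simp
qed

lemma ell2_inner_summable:
  assumes "a \<in> ell2" "b \<in> ell2" shows "summable (\<lambda>n. cnj (a n) * b n)"
  by (rule summable_norm_cancel) (simp add: norm_mult ell2_summable_norm_mult[OF assms])

lemma ell2_inner_Cauchy_Schwarz:
  assumes "a \<in> ell2" "b \<in> ell2"
  shows "cmod (ell2_inner a b) \<le> ell2_norm a * ell2_norm b"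
proof -
  have sa: "summable (\<lambda>n. (cmod (a n))\<^sup>2)" and sb: "summable (\<lambda>n. (cmod (b n))\<^sup>2)"
    using assms by (auto simp: ell2_def)
  have "cmod (ell2_inner a b) \<le> (\<Sum>n. cmod (a n) * cmod (b n))"
    unfolding ell2_inner_def
    by (rule order_trans[OF summable_norm])
      (simp_all add: norm_mult ell2_summable_norm_mult[OF assms])
  also have "\<dots> \<le> ell2_norm a * ell2_norm b"
  proof (rule suminf_le_const[OF ell2_summable_norm_mult[OF assms]])
    fix N
    have "(\<Sum>n<N. cmod (a n) * cmod (b n))
        \<le> L2_set (\<lambda>n. cmod (a n)) {..<N} * L2_set (\<lambda>n. cmod (b n)) {..<N}"
      using L2_set_mult_ineq[of "\<lambda>n. cmod (a n)" "\<lambda>n. cmod (b n)" "{..<N}"] by simp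
    also have "\<dots> \<le> ell2_norm a * ell2_norm b"
      unfolding L2_set_def ell2_norm_def
      by (intro mult_mono real_sqrt_le_mono sum_le_suminf sa sb real_sqrt_ge_zero suminf_nonneg
          sum_nonneg) auto
    finally show "(\<Sum>n<N. cmod (a n) * cmod (b n)) \<le> ell2_norm a * ell2_norm b" .
  qed
  finally show ?thesis .
qed

lemma ell2_inner_cnj:
  assumes "a \<in> ell2" "b \<in> ell2" shows "ell2_inner b a = cnj (ell2_inner a b)"
proof -
  have "(\<lambda>n. cnj (cnj (a n) * b n)) sums cnj (ell2_inner a b)"
    using ell2_inner_summable[OF assms] unfolding ell2_inner_def sums_cnj by (rule summable_sums)
  then show ?thesis
    unfolding ell2_inner_def by (simp add: mult.commute sums_iff)
qed

lemma ell2_inner_diff_left: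
  assumes "a \<in> ell2" "a' \<in> ell2" "b \<in> ell2"
  shows "ell2_inner (a - a') b = ell2_inner a b - ell2_inner a' b"
  unfolding ell2_inner_def
  by (subst suminf_diff[OF ell2_inner_summable[OF assms(1,3)] ell2_inner_summable[OF assms(2,3)]])
     (simp add: left_diff_distrib)

lemma tendsto_ell2_inner_left:
  assumes "\<And>m. A m \<in> ell2" "a \<in> ell2" "b \<in> ell2" "(\<lambda>m. ell2_norm (A m - a)) \<longlonglongrightarrow> 0"
  shows "(\<lambda>m. ell2_inner (A m) b) \<longlonglongrightarrow> ell2_inner a b"
proof -
  have "\<forall>m. norm (ell2_inner (A m) b - ell2_inner a b) \<le> ell2_norm (A m - a) * ell2_norm b"
    using ell2_inner_Cauchy_Schwarz[OF ell2_diff[OF assms(1,2)] assms(3)]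
    by (simp add: ell2_inner_diff_left[OF assms(1,2,3)])
  moreover have "(\<lambda>m. ell2_norm (A m - a) * ell2_norm b) \<longlonglongrightarrow> 0"
    using tendsto_mult_left_zero[OF assms(4)] by simp
  ultimately have "(\<lambda>m. ell2_inner (A m) b - ell2_inner a b) \<longlonglongrightarrow> 0"
    by (rule Lim_null_comparison[OF always_eventually])
  then show ?thesis
    by (simp add: LIM_zero_iff)
qed

lemma tendsto_ell2_inner_right:
  assumes "\<And>m. B m \<in> ell2" "a \<in> ell2" "b \<in> ell2" "(\<lambda>m. ell2_norm (B m - b)) \<longlonglongrightarrow> 0"
  shows "(\<lambda>m. ell2_inner a (B m)) \<longlonglongrightarrow> ell2_inner a b"
proof -
  have "ell2_inner a (B m) = cnj (ell2_inner (B m) a)" for m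
    using ell2_inner_cnj[OF assms(1,2)] by simp
  moreover have "ell2_inner a b = cnj (ell2_inner b a)"
    using ell2_inner_cnj[OF assms(3,2)] by simp
  ultimately show ?thesis
    using tendsto_cnj[OF tendsto_ell2_inner_left[OF assms(1,3,2,4)]] by simp
qed

lemma ell2_norm_tendsto_zero_dominated:
  assumes "\<And>n. (\<lambda>m. X m n) \<longlonglongrightarrow> x n"
    and "\<And>m n. (cmod (X m n - x n))\<^sup>2 \<le> g n" and "summable g"
  shows "(\<lambda>m. ell2_norm (X m - x)) \<longlonglongrightarrow> 0"
proof -
  have "(\<lambda>m. \<Sum>n. (cmod (X m n - x n))\<^sup>2) \<longlonglongrightarrow> (\<Sum>n. 0 :: real)"
  proof (rule tannerys_theorem[THEN conjunct2, THEN conjunct2])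
    show "(\<lambda>m. (cmod (X m n - x n))\<^sup>2) \<longlonglongrightarrow> 0" for n
      using tendsto_power[OF tendsto_norm[OF LIM_zero[OF assms(1)]], where n = 2] by simp
    show "\<forall>\<^sub>F (n, m) in sequentially \<times>\<^sub>F sequentially. norm ((cmod (X m n - x n))\<^sup>2) \<le> g n"
      by (rule always_eventually) (auto simp: assms(2))
  qed (use assms(3) in simp_all)
  then show ?thesis
    unfolding ell2_norm_def using tendsto_real_sqrt[of _ 0] by simp
qed

section \<open>Graphs, closures and adjoints\<close>

lemma graph_closure_mono: "G \<subseteq> H \<Longrightarrow> graph_closure G \<subseteq> graph_closure H"
  unfolding graph_closure_def by (clarsimp, blast)

lemma subset_graph_closure:
  assumes "G \<subseteq> ell2 \<times> ell2" shows "G \<subseteq> graph_closure G"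
proof clarify
  fix x w assume xw: "(x, w) \<in> G"
  then have "x \<in> ell2" "w \<in> ell2"
    using assms by auto
  with xw show "(x, w) \<in> graph_closure G"
    unfolding graph_closure_def
    by (simp, intro exI[of _ "\<lambda>_. x"] exI[of _ "\<lambda>_. w"]) (simp add: ell2_norm_def)
qed

lemma graph_adjoint_antimono: "G \<subseteq> H \<Longrightarrow> graph_adjoint H \<subseteq> graph_adjoint G"
  unfolding graph_adjoint_def by auto

lemma graph_adjoint_graph_closure:
  assumes "G \<subseteq> ell2 \<times> ell2"
  shows "graph_adjoint (graph_closure G) = graph_adjoint G"
proof
  show "graph_adjoint (graph_closure G) \<subseteq> graph_adjoint G"
    using graph_adjoint_antimono[OF subset_graph_closure[OF assms]] .
next
  show "graph_adjoint G \<subseteq> graph_adjoint (graph_closure G)"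
  proof clarify
    fix y z assume "(y, z) \<in> graph_adjoint G"
    then have y: "y \<in> ell2" and z: "z \<in> ell2"
      and adj: "\<And>x w. (x, w) \<in> G \<Longrightarrow> ell2_inner w y = ell2_inner x z"
      unfolding graph_adjoint_def by auto
    have "ell2_inner w y = ell2_inner x z" if xw: "(x, w) \<in> graph_closure G" for x w
    proof -
      obtain X Y where x: "x \<in> ell2" and w: "w \<in> ell2" and XY: "\<And>m. (X m, Y m) \<in> G"
        and X_lim: "(\<lambda>m. ell2_norm (X m - x)) \<longlonglongrightarrow> 0"
        and Y_lim: "(\<lambda>m. ell2_norm (Y m - w)) \<longlonglongrightarrow> 0"
        using xw unfolding graph_closure_def by blast
      have X: "X m \<in> ell2" and Y: "Y m \<in> ell2" for m
        using XY assms by auto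
      have "(\<lambda>m. ell2_inner (X m) z) \<longlonglongrightarrow> ell2_inner w y"
        using tendsto_ell2_inner_left[OF Y w y Y_lim] adj[OF XY] by simp
      then show ?thesis
        using tendsto_ell2_inner_left[OF X x z X_lim] by (rule LIMSEQ_unique)
    qed
    then show "(y, z) \<in> graph_adjoint (graph_closure G)"
      unfolding graph_adjoint_def using y z by auto
  qed
qed

lemma graph_closure_graph_adjoint:
  assumes "G \<subseteq> ell2 \<times> ell2"
  shows "graph_closure (graph_adjoint G) \<subseteq> graph_adjoint G"
proof clarify
  fix y z assume "(y, z) \<in> graph_closure (graph_adjoint G)"
  then obtain Y Z where y: "y \<in> ell2" and z: "z \<in> ell2" and YZ: "\<And>m. (Y m, Z m) \<in> graph_adjoint G"
    and Y_lim: "(\<lambda>m. ell2_norm (Y m - y)) \<longlonglongrightarrow> 0" and Z_lim: "(\<lambda>m. ell2_norm (Z m - z)) \<longlonglongrightarrow> 0"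
    unfolding graph_closure_def by blast
  have Y: "Y m \<in> ell2" and Z: "Z m \<in> ell2" for m
    using YZ unfolding graph_adjoint_def by auto
  have "ell2_inner w y = ell2_inner x z" if xw: "(x, w) \<in> G" for x w
  proof -
    have x: "x \<in> ell2" and w: "w \<in> ell2"
      using xw assms by auto
    have "ell2_inner w (Y m) = ell2_inner x (Z m)" for m
      using YZ[of m] xw unfolding graph_adjoint_def by auto
    then have "(\<lambda>m. ell2_inner x (Z m)) \<longlonglongrightarrow> ell2_inner w y"
      using tendsto_ell2_inner_right[OF Y w y Y_lim] by simp
    then show ?thesis
      using tendsto_ell2_inner_right[OF Z x z Z_lim] by (rule LIMSEQ_unique)
  qed
  then show "(y, z) \<in> graph_adjoint G"
    unfolding graph_adjoint_def using y z by auto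
qed

lemma self_adjoint_graph_closureI:
  assumes "G \<subseteq> ell2 \<times> ell2" and "G \<subseteq> graph_adjoint G" and "graph_adjoint G \<subseteq> graph_closure G"
  shows "self_adjoint_graph (graph_closure G)"
proof -
  have "graph_closure G \<subseteq> graph_adjoint G"
    using graph_closure_mono[OF assms(2)] graph_closure_graph_adjoint[OF assms(1)] by blast
  then show ?thesis
    unfolding self_adjoint_graph_def graph_adjoint_graph_closure[OF assms(1)]
    using assms(3) by blast
qed

lemma graph_adjoint_graph_of_D0:
  assumes symmetric: "\<And>u v. u \<in> D0 \<Longrightarrow> ell2_inner (T u) v = ell2_inner u (T v)"
    and "(y, z) \<in> graph_adjoint (graph_of D0 T)"
  shows "z = T y"
proof
  fix j
  let ?e = "\<lambda>n::nat. if n = j then 1 else 0 :: complex"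
  have e: "?e \<in> D0"
    unfolding D0_def by simp
  then have "ell2_inner (T ?e) y = ell2_inner ?e z"
    using assms(2) by (auto simp: graph_adjoint_def graph_of_def)
  then show "z j = T y j"
    by (simp add: symmetric[OF e] ell2_inner_basis_left)
qed

lemma essentially_self_adjoint_D0I:
  assumes maps_ell2: "\<And>u. u \<in> D0 \<Longrightarrow> T u \<in> ell2"
    and symmetric: "\<And>u v. u \<in> D0 \<Longrightarrow> ell2_inner (T u) v = ell2_inner u (T v)"
    and approx: "\<And>y. y \<in> ell2 \<Longrightarrow> T y \<in> ell2 \<Longrightarrow> \<exists>X. (\<forall>m. X m \<in> D0) \<and>
        (\<lambda>m. ell2_norm (X m - y)) \<longlonglongrightarrow> 0 \<and> (\<lambda>m. ell2_norm (T (X m) - T y)) \<longlonglongrightarrow> 0"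
  shows "essentially_self_adjoint D0 T"
  unfolding essentially_self_adjoint_def
proof (rule self_adjoint_graph_closureI)
  let ?G = "graph_of D0 T"
  show "?G \<subseteq> ell2 \<times> ell2"
    using D0_subset_ell2 maps_ell2 by (auto simp: graph_of_def)
  show "?G \<subseteq> graph_adjoint ?G"
  proof
    fix p assume "p \<in> ?G"
    then obtain x where p: "p = (x, T x)" and x: "x \<in> D0"
      by (auto simp: graph_of_def)
    show "p \<in> graph_adjoint ?G"
      unfolding p graph_adjoint_def graph_of_def using x D0_subset_ell2 maps_ell2 symmetric by auto
  qed
  show "graph_adjoint ?G \<subseteq> graph_closure ?G"
  proof clarify
    fix y z assume yz: "(y, z) \<in> graph_adjoint ?G"
    then have y: "y \<in> ell2" and z: "z \<in> ell2"
      by (auto simp: graph_adjoint_def)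
    obtain X where "\<forall>m. X m \<in> D0" "(\<lambda>m. ell2_norm (X m - y)) \<longlonglongrightarrow> 0"
        "(\<lambda>m. ell2_norm (T (X m) - z)) \<longlonglongrightarrow> 0"
      using approx[OF y] z graph_adjoint_graph_of_D0[OF symmetric yz] by blast
    then show "(y, z) \<in> graph_closure ?G"
      unfolding graph_closure_def graph_of_def using y z
      by (simp, intro exI[of _ X] exI[of _ "\<lambda>m. T (X m)"]) auto
  qed
qed

section \<open>Ladder operators\<close>

definition ladder_coeff :: "nat \<Rightarrow> nat \<Rightarrow> real" where
  "ladder_coeff j n = sqrt (pochhammer (real n + 1) j)"

lemma ann_funpow: "(ann ^^ j) u n = of_real (ladder_coeff j n) * u (n + j)"
proof (induction j arbitrary: n)
  case 0
  show ?case by (simp add: ladder_coeff_def)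
next
  case (Suc j)
  have "ladder_coeff (Suc j) n = sqrt (real (Suc n)) * ladder_coeff j (Suc n)"
    by (simp add: ladder_coeff_def pochhammer_rec real_sqrt_mult add_ac)
  then show ?case
    using Suc by (simp add: ann_def)
qed

lemma cre_funpow:
  "(cre ^^ j) u n = (if j \<le> n then of_real (ladder_coeff j (n - j)) * u (n - j) else 0)"
proof (induction j arbitrary: n)
  case 0
  show ?case by (simp add: ladder_coeff_def)
next
  case (Suc j)
  have "ladder_coeff (Suc j) (n - Suc j) = sqrt (real n) * ladder_coeff j (n - 1 - j)"
    if "Suc j \<le> n"
    using that by (simp add: ladder_coeff_def pochhammer_rec' real_sqrt_mult of_nat_diff)
  then show ?case
    using Suc by (auto simp: cre_def)
qed

lemma cre_funpow_D0:
  assumes "u \<in> D0" shows "(cre ^^ j) u \<in> D0"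
proof -
  obtain M where "\<And>n. n \<ge> M \<Longrightarrow> u n = 0"
    using assms unfolding D0_iff_eventually_zero eventually_sequentially by blast
  then have "\<forall>n\<ge>M + j. (cre ^^ j) u n = 0"
    by (simp add: cre_funpow)
  then show ?thesis
    unfolding D0_iff_eventually_zero eventually_sequentially by blast
qed

lemma ann_funpow_D0:
  assumes "u \<in> D0" shows "(ann ^^ j) u \<in> D0"
proof -
  obtain M where "\<And>n. n \<ge> M \<Longrightarrow> u n = 0"
    using assms unfolding D0_iff_eventually_zero eventually_sequentially by blast
  then have "\<forall>n\<ge>M. (ann ^^ j) u n = 0"
    by (simp add: ann_funpow)
  then show ?thesis
    unfolding D0_iff_eventually_zero eventually_sequentially by blast
qed

lemma numfun_D0: "u \<in> D0 \<Longrightarrow> numfun f u \<in> D0"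
  unfolding D0_iff_eventually_zero numfun_def by (auto elim: eventually_mono)

lemma opA_D0:
  assumes "u \<in> D0" shows "opA k \<xi> f u \<in> D0"
proof -
  have "\<forall>\<^sub>F n in sequentially. (cre ^^ k) u n = 0 \<and> (ann ^^ k) u n = 0 \<and> numfun f u n = 0"
    using cre_funpow_D0[OF assms] ann_funpow_D0[OF assms] numfun_D0[OF assms]
    unfolding D0_iff_eventually_zero by (intro eventually_conj)
  then show ?thesis
    unfolding D0_iff_eventually_zero opA_def by (rule eventually_mono) simp
qed

lemma ell2_inner_cre_funpow:
  assumes "u \<in> D0"
  shows "ell2_inner ((cre ^^ j) u) v = ell2_inner u ((ann ^^ j) v)"
proof -
  have "(\<lambda>p. cnj (u p) * (ann ^^ j) v p) sums ell2_inner u ((ann ^^ j) v)"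
    unfolding ell2_inner_def by (rule summable_sums[OF D0_inner_summable[OF assms]])
  then have "(\<lambda>n. if j \<le> n then cnj (u (n - j)) * (ann ^^ j) v (n - j) else 0)
      sums ell2_inner u ((ann ^^ j) v)"
    by (rule sums_shift_right)
  moreover have "(\<lambda>n. if j \<le> n then cnj (u (n - j)) * (ann ^^ j) v (n - j) else 0)
      = (\<lambda>n. cnj ((cre ^^ j) u n) * v n)"
    by (auto simp: cre_funpow ann_funpow)
  ultimately show ?thesis
    unfolding ell2_inner_def by (simp add: sums_iff)
qed

lemma ell2_inner_ann_funpow:
  assumes "u \<in> D0"
  shows "ell2_inner ((ann ^^ j) u) v = ell2_inner u ((cre ^^ j) v)"
proof -
  have "(\<lambda>p. cnj ((ann ^^ j) u p) * v p) sums ell2_inner ((ann ^^ j) u) v"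
    unfolding ell2_inner_def
    by (rule summable_sums[OF D0_inner_summable[OF ann_funpow_D0[OF assms]]])
  then have "(\<lambda>n. if j \<le> n then cnj ((ann ^^ j) u (n - j)) * v (n - j) else 0)
      sums ell2_inner ((ann ^^ j) u) v"
    by (rule sums_shift_right)
  moreover have "(\<lambda>n. if j \<le> n then cnj ((ann ^^ j) u (n - j)) * v (n - j) else 0)
      = (\<lambda>n. cnj (u n) * (cre ^^ j) v n)"
    by (auto simp: cre_funpow ann_funpow)
  ultimately show ?thesis
    unfolding ell2_inner_def by (simp add: sums_iff)
qed

lemma ell2_inner_numfun: "ell2_inner (numfun f u) v = ell2_inner u (numfun f v)"
  unfolding ell2_inner_def numfun_def by (simp add: mult_ac)

lemma opA_symmetric:
  assumes "u \<in> D0"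
  shows "ell2_inner (opA k \<xi> f u) v = ell2_inner u (opA k \<xi> f v)"
proof -
  let ?C = "(cre ^^ k) u" and ?A = "(ann ^^ k) u" and ?N = "numfun f u"
  have "(\<lambda>n. cnj \<xi> * (cnj (?C n) * v n) + \<xi> * (cnj (?A n) * v n) + cnj (?N n) * v n)
      sums (cnj \<xi> * ell2_inner ?C v + \<xi> * ell2_inner ?A v + ell2_inner ?N v)"
    unfolding ell2_inner_def
    by (intro sums_add sums_mult summable_sums D0_inner_summable
        cre_funpow_D0 ann_funpow_D0 numfun_D0 assms)
  moreover have "(\<lambda>n. \<xi> * (cnj (u n) * (cre ^^ k) v n) + cnj \<xi> * (cnj (u n) * (ann ^^ k) v n)
        + cnj (u n) * numfun f v n)
      sums (\<xi> * ell2_inner u ((cre ^^ k) v) + cnj \<xi> * ell2_inner u ((ann ^^ k) v)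
        + ell2_inner u (numfun f v))"
    unfolding ell2_inner_def
    by (intro sums_add sums_mult summable_sums D0_inner_summable assms)
  moreover have "(\<lambda>n. cnj (opA k \<xi> f u n) * v n)
      = (\<lambda>n. cnj \<xi> * (cnj (?C n) * v n) + \<xi> * (cnj (?A n) * v n) + cnj (?N n) * v n)"
    by (rule ext) (simp add: opA_def algebra_simps)
  moreover have "(\<lambda>n. cnj (u n) * opA k \<xi> f v n)
      = (\<lambda>n. \<xi> * (cnj (u n) * (cre ^^ k) v n) + cnj \<xi> * (cnj (u n) * (ann ^^ k) v n)
        + cnj (u n) * numfun f v n)"
    by (rule ext) (simp add: opA_def algebra_simps)
  ultimately show ?thesis
    unfolding ell2_inner_def[of "opA k \<xi> f u"] ell2_inner_def[of u "opA k \<xi> f v"]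
    by (simp add: sums_iff ell2_inner_cre_funpow ell2_inner_ann_funpow ell2_inner_numfun assms
        add_ac)
qed

lemma opA_numfun_commutator:
  "opA k \<xi> f (numfun w y) n - of_real (w n) * opA k \<xi> f y n
    = \<xi> * (if k \<le> n then of_real (ladder_coeff k (n - k) * (w (n - k) - w n)) * y (n - k) else 0)
      + cnj \<xi> * (of_real (ladder_coeff k n * (w (n + k) - w n)) * y (n + k))"
  by (simp add: opA_def cre_funpow ann_funpow numfun_def algebra_simps)

section \<open>Cutoffs\<close>

definition cutoff :: "real \<Rightarrow> nat \<Rightarrow> real" where
  "cutoff R n = max 0 (min 1 (2 - real n / R))"

lemma cutoff_nonneg: "0 \<le> cutoff R n"
  and cutoff_le_1: "cutoff R n \<le> 1"
  by (auto simp: cutoff_def)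

lemma cutoff_eq_1: "R > 0 \<Longrightarrow> real n \<le> R \<Longrightarrow> cutoff R n = 1"
  by (simp add: cutoff_def field_simps)

lemma cutoff_eq_0: "R > 0 \<Longrightarrow> 2 * R \<le> real n \<Longrightarrow> cutoff R n = 0"
  by (simp add: cutoff_def field_simps)

lemma cutoff_lipschitz:
  assumes "R > 0" shows "\<bar>cutoff R p - cutoff R q\<bar> \<le> \<bar>real p - real q\<bar> / R"
proof -
  have clamp: "\<bar>max 0 (min 1 s) - max 0 (min 1 t)\<bar> \<le> \<bar>s - t\<bar>" for s t :: real
    by (auto simp: max_def min_def)
  have "(2 - real p / R) - (2 - real q / R) = (real q - real p) / R"
    by (simp add: diff_divide_distrib)
  then have "\<bar>(2 - real p / R) - (2 - real q / R)\<bar> = \<bar>real p - real q\<bar> / R"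
    using assms by (simp add: abs_minus_commute)
  then show ?thesis
    using clamp[of "2 - real p / R" "2 - real q / R"] unfolding cutoff_def by simp
qed

lemma cutoff_eventually_1: "\<forall>\<^sub>F m in sequentially. cutoff (real (Suc m)) n = 1"
  unfolding eventually_sequentially by (intro exI[of _ n] allI impI cutoff_eq_1) auto

lemma numfun_cutoff_D0: "R > 0 \<Longrightarrow> numfun (cutoff R) y \<in> D0"
  unfolding D0_iff_eventually_zero eventually_sequentially numfun_def
  by (auto intro!: exI[of _ "nat \<lceil>2 * R\<rceil>"] cutoff_eq_0)

lemma numfun_cutoff_tendsto:
  assumes "y \<in> ell2"
  shows "(\<lambda>m. ell2_norm (numfun (cutoff (real (Suc m))) y - y)) \<longlonglongrightarrow> 0"
proof (rule ell2_norm_tendsto_zero_dominated)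
  show "(\<lambda>m. numfun (cutoff (real (Suc m))) y n) \<longlonglongrightarrow> y n" for n
    by (rule tendsto_eventually, rule eventually_mono[OF cutoff_eventually_1[of n]])
      (simp add: numfun_def)
  show "(cmod (numfun (cutoff (real (Suc m))) y n - y n))\<^sup>2 \<le> (cmod (y n))\<^sup>2" for m n
  proof -
    let ?w = "cutoff (real (Suc m)) n"
    have "numfun (cutoff (real (Suc m))) y n - y n = of_real (?w - 1) * y n"
      by (simp add: numfun_def algebra_simps)
    then have "cmod (numfun (cutoff (real (Suc m))) y n - y n) = \<bar>?w - 1\<bar> * cmod (y n)"
      by (simp only: norm_mult norm_of_real)
    also have "\<dots> \<le> cmod (y n)"
      using cutoff_nonneg[of _ n] cutoff_le_1[of _ n] by (intro mult_left_le_one_le) auto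
    finally show ?thesis
      by (simp add: power_mono)
  qed
  show "summable (\<lambda>n. (cmod (y n))\<^sup>2)"
    using assms by (simp add: ell2_def)
qed

lemma ladder_coeff_sq_le: "(ladder_coeff k n)\<^sup>2 \<le> real (n + k) ^ k"
proof -
  have "pochhammer (real n + 1) k = (\<Prod>i<k. real n + 1 + real i)"
    by (simp add: pochhammer_prod atLeast0LessThan)
  also have "\<dots> \<le> (\<Prod>i<k. real (n + k))"
    by (intro prod_mono) auto
  finally show ?thesis
    by (simp add: ladder_coeff_def pochhammer_nonneg)
qed

lemma ladder_coeff_cutoff_diff_le:
  assumes "k \<le> 2" and "R \<ge> 1"
  shows "(ladder_coeff k n * (cutoff R n - cutoff R (n + k)))\<^sup>2 \<le> 64"
proof (cases "2 * R \<le> real n")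
  case True
  then show ?thesis
    using assms by (simp add: cutoff_eq_0)
next
  case False
  have "(ladder_coeff k n)\<^sup>2 \<le> (4 * R)\<^sup>2"
  proof -
    have "real (n + k) \<le> 4 * R"
      using False assms by simp
    then have "real (n + k) ^ k \<le> (4 * R) ^ k"
      by (intro power_mono) auto
    also have "\<dots> \<le> (4 * R)\<^sup>2"
      using assms by (intro power_increasing) auto
    finally show ?thesis
      using ladder_coeff_sq_le[of k n] by linarith
  qed
  moreover have "(cutoff R n - cutoff R (n + k))\<^sup>2 \<le> (2 / R)\<^sup>2"
  proof -
    have "real k / R \<le> 2 / R"
      using assms by (intro divide_right_mono) auto
    then have "\<bar>cutoff R n - cutoff R (n + k)\<bar> \<le> 2 / R"
      using cutoff_lipschitz[of R n "n + k"] assms by simp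
    then show ?thesis
      using power_mono[OF _ abs_ge_zero, of _ "2 / R" 2] by simp
  qed
  ultimately have "(ladder_coeff k n * (cutoff R n - cutoff R (n + k)))\<^sup>2 \<le> (4 * R)\<^sup>2 * (2 / R)\<^sup>2"
    unfolding power_mult_distrib by (intro mult_mono) auto
  also have "\<dots> = 64"
    using assms by (simp add: field_simps power2_eq_square)
  finally show ?thesis .
qed

lemma opA_cutoff_commutator_sq_le:
  assumes "k \<le> 2" and "R \<ge> 1"
  shows "(cmod (opA k \<xi> f (numfun (cutoff R) y) n - of_real (cutoff R n) * opA k \<xi> f y n))\<^sup>2
    \<le> 128 * (cmod \<xi>)\<^sup>2 * ((if k \<le> n then (cmod (y (n - k)))\<^sup>2 else 0) + (cmod (y (n + k)))\<^sup>2)"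
proof -
  define P where "P = (if k \<le> n
    then of_real (ladder_coeff k (n - k) * (cutoff R (n - k) - cutoff R n)) * y (n - k) else 0)"
  define Q where "Q = of_real (ladder_coeff k n * (cutoff R (n + k) - cutoff R n)) * y (n + k)"
  have P_bound: "(cmod P)\<^sup>2 \<le> 64 * (if k \<le> n then (cmod (y (n - k)))\<^sup>2 else 0)"
  proof (cases "k \<le> n")
    case True
    have "(ladder_coeff k (n - k) * (cutoff R (n - k) - cutoff R n))\<^sup>2 \<le> 64"
      using ladder_coeff_cutoff_diff_le[OF assms, of "n - k"] True by simp
    moreover have "(cmod P)\<^sup>2
        = (ladder_coeff k (n - k) * (cutoff R (n - k) - cutoff R n))\<^sup>2 * (cmod (y (n - k)))\<^sup>2"
      using True by (simp only: P_def if_True norm_mult norm_of_real power_mult_distrib power2_abs)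
    ultimately show ?thesis
      using True by (simp add: mult_right_mono)
  qed (simp add: P_def)
  have Q_bound: "(cmod Q)\<^sup>2 \<le> 64 * (cmod (y (n + k)))\<^sup>2"
  proof -
    have "(ladder_coeff k n * (cutoff R (n + k) - cutoff R n))\<^sup>2 \<le> 64"
      using ladder_coeff_cutoff_diff_le[OF assms, of n]
      by (simp add: power2_commute right_diff_distrib)
    moreover have "(cmod Q)\<^sup>2
        = (ladder_coeff k n * (cutoff R (n + k) - cutoff R n))\<^sup>2 * (cmod (y (n + k)))\<^sup>2"
      by (simp only: Q_def norm_mult norm_of_real power_mult_distrib power2_abs)
    ultimately show ?thesis
      by (simp add: mult_right_mono)
  qed
  have "(cmod (\<xi> * P + cnj \<xi> * Q))\<^sup>2 \<le> 2 * ((cmod \<xi>)\<^sup>2 * (cmod P)\<^sup>2 + (cmod \<xi>)\<^sup>2 * (cmod Q)\<^sup>2)"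
    using cmod_add_sq_le[of "\<xi> * P" "cnj \<xi> * Q"] by (simp add: norm_mult power_mult_distrib)
  also have "\<dots> \<le> 128 * (cmod \<xi>)\<^sup>2
      * ((if k \<le> n then (cmod (y (n - k)))\<^sup>2 else 0) + (cmod (y (n + k)))\<^sup>2)"
    using mult_left_mono[OF P_bound, of "(cmod \<xi>)\<^sup>2"] mult_left_mono[OF Q_bound, of "(cmod \<xi>)\<^sup>2"]
    by (simp add: algebra_simps)
  finally show ?thesis
    unfolding opA_numfun_commutator P_def Q_def .
qed

lemma opA_cutoff_eventually_eq:
  "\<forall>\<^sub>F m in sequentially. opA k \<xi> f (numfun (cutoff (real (Suc m))) y) n = opA k \<xi> f y n"
proof -
  let ?W = "\<lambda>m. cutoff (real (Suc m))"
  have "\<forall>\<^sub>F m in sequentially. ?W m (n - k) = 1 \<and> ?W m n = 1 \<and> ?W m (n + k) = 1"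
    by (intro eventually_conj cutoff_eventually_1)
  then show ?thesis
  proof (rule eventually_mono)
    fix m assume W_1: "?W m (n - k) = 1 \<and> ?W m n = 1 \<and> ?W m (n + k) = 1"
    then have "opA k \<xi> f (numfun (?W m) y) n - of_real (?W m n) * opA k \<xi> f y n = 0"
      unfolding opA_numfun_commutator by simp
    then show "opA k \<xi> f (numfun (?W m) y) n = opA k \<xi> f y n"
      using W_1 by simp
  qed
qed

lemma opA_cutoff_diff_sq_le:
  assumes "k \<le> 2" and "R \<ge> 1"
  shows "(cmod (opA k \<xi> f (numfun (cutoff R) y) n - opA k \<xi> f y n))\<^sup>2
    \<le> 2 * (128 * (cmod \<xi>)\<^sup>2 * ((if k \<le> n then (cmod (y (n - k)))\<^sup>2 else 0) + (cmod (y (n + k)))\<^sup>2)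
      + (cmod (opA k \<xi> f y n))\<^sup>2)"
proof -
  let ?T = "opA k \<xi> f"
  have "cmod (of_real (cutoff R n - 1) * ?T y n) \<le> cmod (?T y n)"
    unfolding norm_mult norm_of_real using cutoff_nonneg[of R n] cutoff_le_1[of R n]
    by (intro mult_left_le_one_le) auto
  then have cutoff_defect: "(cmod (of_real (cutoff R n - 1) * ?T y n))\<^sup>2 \<le> (cmod (?T y n))\<^sup>2"
    by (simp add: power_mono)
  have "?T (numfun (cutoff R) y) n - ?T y n
      = (?T (numfun (cutoff R) y) n - of_real (cutoff R n) * ?T y n)
        + of_real (cutoff R n - 1) * ?T y n"
    by (simp add: algebra_simps)
  then have "(cmod (?T (numfun (cutoff R) y) n - ?T y n))\<^sup>2
      \<le> 2 * ((cmod (?T (numfun (cutoff R) y) n - of_real (cutoff R n) * ?T y n))\<^sup>2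
        + (cmod (of_real (cutoff R n - 1) * ?T y n))\<^sup>2)"
    by (simp only: cmod_add_sq_le)
  also have "\<dots> \<le> 2 * (128 * (cmod \<xi>)\<^sup>2 * ((if k \<le> n then (cmod (y (n - k)))\<^sup>2 else 0)
      + (cmod (y (n + k)))\<^sup>2) + (cmod (?T y n))\<^sup>2)"
    using opA_cutoff_commutator_sq_le[OF assms, of \<xi> f y n] cutoff_defect
    by (intro mult_left_mono add_mono) auto
  finally show ?thesis .
qed

lemma opA_cutoff_approx:
  assumes "k \<le> 2" and y: "y \<in> ell2" and Ty: "opA k \<xi> f y \<in> ell2"
  shows "\<exists>X. (\<forall>m. X m \<in> D0) \<and> (\<lambda>m. ell2_norm (X m - y)) \<longlonglongrightarrow> 0
    \<and> (\<lambda>m. ell2_norm (opA k \<xi> f (X m) - opA k \<xi> f y)) \<longlonglongrightarrow> 0"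
proof (intro exI conjI allI)
  let ?X = "\<lambda>m. numfun (cutoff (real (Suc m))) y"
  show "?X m \<in> D0" for m
    by (simp add: numfun_cutoff_D0)
  show "(\<lambda>m. ell2_norm (?X m - y)) \<longlonglongrightarrow> 0"
    using numfun_cutoff_tendsto[OF y] .
  define g where "g n = 2 * (128 * (cmod \<xi>)\<^sup>2
    * ((if k \<le> n then (cmod (y (n - k)))\<^sup>2 else 0) + (cmod (y (n + k)))\<^sup>2)
    + (cmod (opA k \<xi> f y n))\<^sup>2)" for n
  show "(\<lambda>m. ell2_norm (opA k \<xi> f (?X m) - opA k \<xi> f y)) \<longlonglongrightarrow> 0"
  proof (rule ell2_norm_tendsto_zero_dominated)
    show "(\<lambda>m. opA k \<xi> f (?X m) n) \<longlonglongrightarrow> opA k \<xi> f y n" for n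
      by (rule tendsto_eventually[OF opA_cutoff_eventually_eq])
    show "(cmod (opA k \<xi> f (?X m) n - opA k \<xi> f y n))\<^sup>2 \<le> g n" for m n
      unfolding g_def by (rule opA_cutoff_diff_sq_le[OF assms(1)]) simp
    have "summable (\<lambda>n. (cmod (y n))\<^sup>2)" and "summable (\<lambda>n. (cmod (opA k \<xi> f y n))\<^sup>2)"
      using y Ty by (simp_all add: ell2_def)
    then show "summable g"
      unfolding g_def
      by (intro summable_mult summable_add sums_summable[OF sums_shift_right[OF summable_sums]])
        (simp_all add: summable_iff_shift[of "\<lambda>n. (cmod (y n))\<^sup>2" k])
  qed
qed

theorem corollary3p2:
  fixes k :: nat and \<xi> :: complex and f :: "nat \<Rightarrow> real"
  assumes "k \<in> {1, 2}"
    and "\<And>n. f n \<ge> 0"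
    and "\<exists>C > 0. \<exists>N :: nat. \<forall>n \<ge> N. f n \<le> C * real n powr (real k / 2)"
  shows "essentially_self_adjoint D0 (opA k \<xi> f)"
proof (rule essentially_self_adjoint_D0I)
  show "opA k \<xi> f u \<in> ell2" if "u \<in> D0" for u
    using opA_D0[OF that] D0_subset_ell2 by blast
  show "ell2_inner (opA k \<xi> f u) v = ell2_inner u (opA k \<xi> f v)" if "u \<in> D0" for u v
    using opA_symmetric[OF that] .
  have "k \<le> 2"
    using assms(1) by auto
  then show "\<exists>X. (\<forall>m. X m \<in> D0) \<and> (\<lambda>m. ell2_norm (X m - y)) \<longlonglongrightarrow> 0
      \<and> (\<lambda>m. ell2_norm (opA k \<xi> f (X m) - opA k \<xi> f y)) \<longlonglongrightarrow> 0"
    if "y \<in> ell2" and "opA k \<xi> f y \<in> ell2" for y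
    using opA_cutoff_approx that by blast
qed

end
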